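(* Let $S=(\mathbb{R}\cup\{-\infty\},\max,+,-\infty,0)$ be the max-plus semiring, let $A\in M_{n}(S)$, let $b\in S^{n}$ be a regular vector, and suppose $d:=\det_{\varepsilon}(A)\neq-\infty$. For $j\in\{1,\dots,n\}$ let $A_{[j]}$ be the matrix obtained from $A$ by replacing its $j$-th column by $b$, and $d_j:=\det_{\varepsilon}(A_{[j]})$. Then the system $AX=b$ has the maximal solution $X^{*}=(d_1-d,\,d_2-d,\,\dots,\,d_n-d)^{T}$ if and only if $(AA^{-})_{ij}\le b_i-b_j$ for all $i,j\in\{1,\dots,n\}$.
   Context: Matrix operations over $S$: $(A+B)_{ij}=\max(a_{ij},b_{ij})$, $(AC)_{ij}=\max_k(a_{ik}+c_{kj})$. The $\varepsilon$-determinant (with the identity $\varepsilon$-function) of $A\in M_n(S)$ is $\det_{\varepsilon}(A)=\max_{\sigma\in\mathcal{S}_n}\sum_{i=1}^{n}a_{i\sigma(i)}$. $A(i|j)$ denotes the submatrix obtained by deleting row $i$ and column $j$, and the $\varepsilon$-adjoint is $\mathrm{adj}_{\varepsilon}(A)_{ij}=\det_{\varepsilon}(A(j|i))$. When $\det_{\varepsilon}(A)\neq-\infty$ (a unit of $S$), the pseudo-inverse is $A^{-}=(a^{-}_{ij})$ with $a^{-}_{ij}=\mathrm{adj}_{\varepsilon}(A)_{ij}-\det_{\varepsilon}(A)$. A vector is regular if none of its entries is $-\infty$. Differences such as $d_j-d$ and $b_i-b_j$ are ordinary real subtraction (in the semifield, $d^{-1}d_j$). A solution $X^{*}$ of $AX=b$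 is maximal if $X\le X^{*}$ componentwise for every solution $X$. *)

theory Defs
  imports "HOL-Combinatorics.Permutations" "HOL-Library.Extended_Real"
begin

text \<open>Max-plus semiring S = R \<union> {-\<infinity>} is represented inside ereal (entries never \<infinity>).
  n x n matrices are functions nat \<Rightarrow> nat \<Rightarrow> ereal with indices in {0..<n}.\<close>

definition mp_det :: "nat \<Rightarrow> (nat \<Rightarrow> nat \<Rightarrow> ereal) \<Rightarrow> ereal" where
  "mp_det n A = Max ((\<lambda>\<sigma>. \<Sum>i<n. A i (\<sigma> i)) ` {\<sigma>. \<sigma> permutes {..<n}})"

definition del_idx :: "nat \<Rightarrow> nat \<Rightarrow> nat" where
  "del_idx i k = (if k < i then k else Suc k)"

definition minor :: "(nat \<Rightarrow> nat \<Rightarrow> ereal) \<Rightarrow> nat \<Rightarrow> nat \<Rightarrow> nat \<Rightarrow> nat \<Rightarrow> ereal" where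
  "minor A i j = (\<lambda>k l. A (del_idx i k) (del_idx j l))"

definition mp_adj :: "nat \<Rightarrow> (nat \<Rightarrow> nat \<Rightarrow> ereal) \<Rightarrow> nat \<Rightarrow> nat \<Rightarrow> ereal" where
  "mp_adj n A i j = mp_det (n - 1) (minor A j i)"

definition mp_pinv :: "nat \<Rightarrow> (nat \<Rightarrow> nat \<Rightarrow> ereal) \<Rightarrow> nat \<Rightarrow> nat \<Rightarrow> ereal" where
  "mp_pinv n A i j = mp_adj n A i j - mp_det n A"

definition mp_mult :: "nat \<Rightarrow> (nat \<Rightarrow> nat \<Rightarrow> ereal) \<Rightarrow> (nat \<Rightarrow> nat \<Rightarrow> ereal) \<Rightarrow> nat \<Rightarrow> nat \<Rightarrow> ereal" where
  "mp_mult n A C i j = Max ((\<lambda>k. A i k + C k j) ` {..<n})"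

definition mp_mulv :: "nat \<Rightarrow> (nat \<Rightarrow> nat \<Rightarrow> ereal) \<Rightarrow> (nat \<Rightarrow> ereal) \<Rightarrow> nat \<Rightarrow> ereal" where
  "mp_mulv n A X i = Max ((\<lambda>k. A i k + X k) ` {..<n})"

definition replace_col :: "(nat \<Rightarrow> nat \<Rightarrow> ereal) \<Rightarrow> (nat \<Rightarrow> ereal) \<Rightarrow> nat \<Rightarrow> nat \<Rightarrow> nat \<Rightarrow> ereal" where
  "replace_col A b j = (\<lambda>i k. if k = j then b i else A i k)"

definition mp_solution :: "nat \<Rightarrow> (nat \<Rightarrow> nat \<Rightarrow> ereal) \<Rightarrow> (nat \<Rightarrow> ereal) \<Rightarrow> (nat \<Rightarrow> ereal) \<Rightarrow> bool" where
  "mp_solution n A b X \<longleftrightarrow> (\<forall>k<n. X k \<noteq> \<infinity>) \<and> (\<forall>i<n. mp_mulv n A X i = b i)"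

definition mp_max_solution :: "nat \<Rightarrow> (nat \<Rightarrow> nat \<Rightarrow> ereal) \<Rightarrow> (nat \<Rightarrow> ereal) \<Rightarrow> (nat \<Rightarrow> ereal) \<Rightarrow> bool" where
  "mp_max_solution n A b X \<longleftrightarrow> mp_solution n A b X \<and>
     (\<forall>Y. mp_solution n A b Y \<longrightarrow> (\<forall>k<n. Y k \<le> X k))"

end

theory Submission
  imports Defs
begin

text \<open>Max-plus determinants admit Laplace expansion along any row or column, with maximum
  in place of sum and no signs. Write \<open>C j k\<close> for the minor \<open>det A(j|k)\<close>. Expanding \<open>A[k]\<close>
  along column \<open>k\<close> gives \<open>d_k = max_j (b_j + C j k)\<close>, hence \<open>(A X*)_i = max_j (b_j + (A A^-)_ij)\<close>;
  expanding \<open>A\<close> along row \<open>i\<close> gives \<open>(A A^-)_ii = 0\<close>. So \<open>A X* = b\<close> holds exactly when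
  \<open>b_j + (A A^-)_ij \<le> b_i\<close> for all \<open>i, j\<close>. Maximality holds unconditionally: expanding \<open>A\<close>
  along column \<open>k\<close> yields a row \<open>i\<close> with \<open>a_ik + C i k = det A\<close>, and then every \<open>Y\<close> with
  \<open>A Y \<le> b\<close> satisfies \<open>Y_k \<le> b_i - a_ik = b_i + C i k - det A \<le> d_k - det A\<close>.\<close>

definition ins_idx :: "nat \<Rightarrow> nat \<Rightarrow> nat" where
  "ins_idx i l = (if l < i then l else l - 1)"

lemma del_idx_neq [simp]: "del_idx i m \<noteq> i"
  by (auto simp: del_idx_def)

lemma ins_idx_del_idx [simp]: "ins_idx i (del_idx i m) = m"
  by (simp add: del_idx_def ins_idx_def)

lemma del_idx_ins_idx [simp]: "l \<noteq> i \<Longrightarrow> del_idx i (ins_idx i l) = l"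
  by (auto simp: del_idx_def ins_idx_def)

lemma del_idx_less: "j < n \<Longrightarrow> m < n - 1 \<Longrightarrow> del_idx j m < n"
  by (auto simp: del_idx_def)

lemma bij_betw_del_idx: "i < n \<Longrightarrow> bij_betw (del_idx i) {..<n-1} ({..<n} - {i})"
  by (rule bij_betw_byWitness[where f' = "ins_idx i"]) (auto simp: del_idx_def ins_idx_def)

lemma bij_betw_ins_idx: "i < n \<Longrightarrow> bij_betw (ins_idx i) ({..<n} - {i}) {..<n-1}"
  by (rule bij_betw_byWitness[where f' = "del_idx i"]) (auto simp: del_idx_def ins_idx_def)

lemma sum_del_idx: "j < n \<Longrightarrow> (\<Sum>m<n-1. f (del_idx j m)) = (\<Sum>l\<in>{..<n}-{j}. f l)"
  by (rule sum.reindex_bij_betw[OF bij_betw_del_idx])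

lemma Max_Max_commute:
  fixes f :: "'a \<Rightarrow> 'b \<Rightarrow> 'c::linorder"
  assumes "finite A" "A \<noteq> {}" "finite B" "B \<noteq> {}"
  shows "Max ((\<lambda>a. Max ((\<lambda>b. f a b) ` B)) ` A) = Max ((\<lambda>b. Max ((\<lambda>a. f a b) ` A)) ` B)"
proof (rule antisym)
  have "f a b \<le> Max ((\<lambda>b. Max ((\<lambda>a. f a b) ` A)) ` B)" if "a \<in> A" "b \<in> B" for a b
    using assms that by (meson Max_ge finite_imageI imageI order_trans)
  then show "Max ((\<lambda>a. Max ((\<lambda>b. f a b) ` B)) ` A) \<le> Max ((\<lambda>b. Max ((\<lambda>a. f a b) ` A)) ` B)"
    using assms by (simp add: Max_le_iff)
  have "f a b \<le> Max ((\<lambda>a. Max ((\<lambda>b. f a b) ` B)) ` A)" if "a \<in> A" "b \<in> B" for a b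
    using assms that by (meson Max_ge finite_imageI imageI order_trans)
  then show "Max ((\<lambda>b. Max ((\<lambda>a. f a b) ` A)) ` B) \<le> Max ((\<lambda>a. Max ((\<lambda>b. f a b) ` B)) ` A)"
    using assms by (simp add: Max_le_iff)
qed

lemma ereal_add_Max:
  fixes c :: ereal
  assumes "finite S" "S \<noteq> {}"
  shows "c + Max (f ` S) = Max ((\<lambda>x. c + f x) ` S)"
  using mono_Max_commute[of "(+) c" "f ` S"] assms by (simp add: mono_def add_left_mono image_image)

lemma ereal_Max_minus:
  fixes c :: ereal
  assumes "finite S" "S \<noteq> {}"
  shows "Max (f ` S) - c = Max ((\<lambda>x. f x - c) ` S)"
  using mono_Max_commute[of "\<lambda>x. x - c" "f ` S"] assms
  by (simp add: mono_def ereal_minus_mono image_image)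

lemma ereal_le_minus_via_sum:
  fixes a c y z p :: ereal
  assumes "a + c = ereal d" "a + y \<le> z" "z + c \<le> p"
  shows "y \<le> p - ereal d"
proof -
  obtain a' c' where "a = ereal a'" "c = ereal c'"
    using assms(1) by (cases a; cases c) auto
  then show ?thesis using assms by (cases y; cases z; cases p) auto
qed

lemma mp_det_ge: "\<sigma> permutes {..<n} \<Longrightarrow> (\<Sum>i<n. A i (\<sigma> i)) \<le> mp_det n A"
  unfolding mp_det_def by (rule Max_ge) (auto simp: finite_permutations)

lemma mp_det_attained:
  obtains \<sigma> where "\<sigma> permutes {..<n}" "mp_det n A = (\<Sum>i<n. A i (\<sigma> i))"
proof -
  have "mp_det n A \<in> (\<lambda>\<sigma>. \<Sum>i<n. A i (\<sigma> i)) ` {\<sigma>. \<sigma> permutes {..<n}}"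
    unfolding mp_det_def by (rule Max_in) (auto simp: finite_permutations intro: permutes_id)
  then show ?thesis using that by auto
qed

lemma mp_det_neq_PInf:
  assumes "\<And>i j. i < n \<Longrightarrow> j < n \<Longrightarrow> A i j \<noteq> \<infinity>"
  shows "mp_det n A \<noteq> \<infinity>"
proof -
  obtain \<sigma> where \<sigma>: "\<sigma> permutes {..<n}" "mp_det n A = (\<Sum>i<n. A i (\<sigma> i))"
    by (rule mp_det_attained)
  then have "\<sigma> i < n" if "i < n" for i
    using permutes_in_image[OF \<sigma>(1), of i] that by simp
  then show ?thesis using \<sigma>(2) assms by (simp add: sum_Pinfty)
qed

lemma bij_betw_permutes_remove:
  assumes "\<tau> permutes {..<n}"
  shows "bij_betw \<tau> ({..<n} - {j}) ({..<n} - {\<tau> j})"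
proof (cases "j < n")
  case True
  show ?thesis
    by (rule bij_betw_DiffI[OF permutes_imp_bij[OF assms], of "{j}"])
       (use True permutes_in_image[OF assms] in auto)
next
  case False
  then show ?thesis using assms permutes_imp_bij permutes_not_in by fastforce
qed

lemma sum_remove_le_mp_det_minor:
  assumes \<tau>: "\<tau> permutes {..<n}" and j: "j < n"
  shows "(\<Sum>l\<in>{..<n}-{j}. A l (\<tau> l)) \<le> mp_det (n-1) (minor A j (\<tau> j))"
proof -
  define k where "k = \<tau> j"
  have k: "k < n" using permutes_in_image[OF \<tau>] j by (simp add: k_def)
  \<comment> \<open>\<open>\<tau>\<close> restricted to the rows \<open>\<noteq> j\<close>, read in the indices of the minor\<close>
  define \<rho> where "\<rho> m = (if m < n-1 then ins_idx k (\<tau> (del_idx j m)) else m)" for m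
  have "bij_betw (ins_idx k \<circ> \<tau> \<circ> del_idx j) {..<n-1} {..<n-1}"
    using bij_betw_del_idx[OF j] bij_betw_permutes_remove[OF \<tau>] bij_betw_ins_idx[OF k]
    unfolding k_def by (blast intro: bij_betw_trans)
  then have "bij_betw \<rho> {..<n-1} {..<n-1}"
    by (rule bij_betw_cong[THEN iffD1, rotated]) (simp add: \<rho>_def)
  then have "\<rho> permutes {..<n-1}"
    by (rule bij_imp_permutes) (simp add: \<rho>_def)
  moreover have "\<tau> (del_idx j m) \<noteq> k" for m
    using permutes_inj[OF \<tau>] del_idx_neq unfolding k_def inj_def by metis
  then have "minor A j k m (\<rho> m) = A (del_idx j m) (\<tau> (del_idx j m))" if "m < n-1" for m
    using that by (simp add: minor_def \<rho>_def)
  ultimately show ?thesis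
    using mp_det_ge[of \<rho> "n-1" "minor A j k"] sum_del_idx[OF j, of "\<lambda>l. A l (\<tau> l)"]
    by (simp add: k_def)
qed

lemma mp_det_minor_attained:
  assumes j: "j < n" and k: "k < n"
  obtains \<tau> where "\<tau> permutes {..<n}" "\<tau> j = k"
    "mp_det (n-1) (minor A j k) = (\<Sum>l\<in>{..<n}-{j}. A l (\<tau> l))"
proof -
  obtain \<rho> where \<rho>: "\<rho> permutes {..<n-1}"
    and \<rho>_opt: "mp_det (n-1) (minor A j k) = (\<Sum>m<n-1. minor A j k m (\<rho> m))"
    by (rule mp_det_attained)
  define \<tau> where
    "\<tau> l = (if l = j then k else if l < n then del_idx k (\<rho> (ins_idx j l)) else l)" for l
  have "bij_betw (del_idx k \<circ> \<rho> \<circ> ins_idx j) ({..<n}-{j}) ({..<n}-{k})"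
    using bij_betw_ins_idx[OF j] permutes_imp_bij[OF \<rho>] bij_betw_del_idx[OF k]
    by (blast intro: bij_betw_trans)
  then have "bij_betw \<tau> ({..<n}-{j}) ({..<n}-{k})"
    by (rule bij_betw_cong[THEN iffD1, rotated]) (auto simp: \<tau>_def)
  then have "bij_betw \<tau> (({..<n}-{j}) \<union> {j}) (({..<n}-{k}) \<union> {k})"
    by (rule bij_betw_combine) (auto simp: \<tau>_def)
  then have "\<tau> permutes {..<n}"
    using j k by (intro bij_imp_permutes) (auto simp: \<tau>_def insert_absorb)
  moreover have "(\<Sum>l\<in>{..<n}-{j}. A l (\<tau> l)) = (\<Sum>m<n-1. minor A j k m (\<rho> m))"
    unfolding sum_del_idx[OF j, symmetric]
    by (rule sum.cong) (auto simp: minor_def \<tau>_def del_idx_less j)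
  ultimately show ?thesis using that \<rho>_opt by (simp add: \<tau>_def)
qed

lemma entry_plus_mp_det_minor_le:
  assumes "j < n" "k < n"
  shows "A j k + mp_det (n-1) (minor A j k) \<le> mp_det n A"
proof -
  obtain \<tau> where \<tau>: "\<tau> permutes {..<n}" "\<tau> j = k"
    and "mp_det (n-1) (minor A j k) = (\<Sum>l\<in>{..<n}-{j}. A l (\<tau> l))"
    using mp_det_minor_attained assms .
  then have "A j k + mp_det (n-1) (minor A j k) = (\<Sum>l<n. A l (\<tau> l))"
    using assms by (simp add: sum.remove)
  then show ?thesis using mp_det_ge[OF \<tau>(1)] by simp
qed

lemma sum_permutes_le_entry_plus_mp_det_minor:
  assumes "\<tau> permutes {..<n}" "j < n"
  shows "(\<Sum>l<n. A l (\<tau> l)) \<le> A j (\<tau> j) + mp_det (n-1) (minor A j (\<tau> j))"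
  using sum_remove_le_mp_det_minor[OF assms] assms(2) by (simp add: sum.remove add_left_mono)

lemma mp_det_row_expansion:
  assumes i: "i < n"
  shows "mp_det n A = Max ((\<lambda>k. A i k + mp_det (n-1) (minor A i k)) ` {..<n})"
proof (rule antisym)
  obtain \<sigma> where \<sigma>: "\<sigma> permutes {..<n}" "mp_det n A = (\<Sum>l<n. A l (\<sigma> l))"
    by (rule mp_det_attained)
  then have "mp_det n A \<le> A i (\<sigma> i) + mp_det (n-1) (minor A i (\<sigma> i))"
    using sum_permutes_le_entry_plus_mp_det_minor[OF \<sigma>(1) i] by simp
  also have "\<dots> \<le> Max ((\<lambda>k. A i k + mp_det (n-1) (minor A i k)) ` {..<n})"
    using permutes_in_image[OF \<sigma>(1)] i by (intro Max_ge) auto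
  finally show "mp_det n A \<le> \<dots>" .
qed (use i entry_plus_mp_det_minor_le[of _ n _ A] in \<open>auto intro!: Max.boundedI\<close>)

lemma mp_det_col_expansion:
  assumes k: "k < n"
  shows "mp_det n A = Max ((\<lambda>j. A j k + mp_det (n-1) (minor A j k)) ` {..<n})"
proof (rule antisym)
  obtain \<sigma> where \<sigma>: "\<sigma> permutes {..<n}" "mp_det n A = (\<Sum>l<n. A l (\<sigma> l))"
    by (rule mp_det_attained)
  define j where "j = inv \<sigma> k"
  have j: "j < n" "\<sigma> j = k"
    using permutes_in_image[OF permutes_inv[OF \<sigma>(1)]] k permutes_inverses(1)[OF \<sigma>(1)]
    by (auto simp: j_def)
  then have "mp_det n A \<le> A j k + mp_det (n-1) (minor A j k)"
    using sum_permutes_le_entry_plus_mp_det_minor[OF \<sigma>(1) j(1)] \<sigma>(2) by simp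
  also have "\<dots> \<le> Max ((\<lambda>j. A j k + mp_det (n-1) (minor A j k)) ` {..<n})"
    using j by (intro Max_ge) auto
  finally show "mp_det n A \<le> \<dots>" .
qed (use k entry_plus_mp_det_minor_le[of _ n _ A] in \<open>auto intro!: Max.boundedI\<close>)

lemma minor_replace_col [simp]: "minor (replace_col A b k) j k = minor A j k"
  by (simp add: minor_def replace_col_def fun_eq_iff)

lemma mp_det_replace_col:
  "k < n \<Longrightarrow> mp_det n (replace_col A b k) = Max ((\<lambda>j. b j + mp_det (n-1) (minor A j k)) ` {..<n})"
  using mp_det_col_expansion[of k n "replace_col A b k"] unfolding minor_replace_col
  by (simp add: replace_col_def)

lemma mp_mult_pinv_diag:
  assumes d: "mp_det n A = ereal d" and i: "i < n"
  shows "mp_mult n A (mp_pinv n A) i i = 0"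
proof -
  have ne: "{..<n} \<noteq> {}" using i by auto
  have "mp_mult n A (mp_pinv n A) i i
      = Max ((\<lambda>k. A i k + mp_det (n-1) (minor A i k) - ereal d) ` {..<n})"
    by (simp add: mp_mult_def mp_pinv_def mp_adj_def d minus_ereal_def add.assoc)
  also have "\<dots> = mp_det n A - ereal d"
    unfolding mp_det_row_expansion[OF i, of A]
    by (rule ereal_Max_minus[OF finite_lessThan ne, symmetric])
  finally show ?thesis using d by simp
qed

lemma mp_mulv_cramer:
  assumes d: "mp_det n A = ereal d" and i: "i < n"
  shows "mp_mulv n A (\<lambda>k. mp_det n (replace_col A b k) - mp_det n A) i
    = Max ((\<lambda>j. b j + mp_mult n A (mp_pinv n A) i j) ` {..<n})"
proof -
  define g where "g j k = A i k + (b j + mp_det (n-1) (minor A j k) - ereal d)" for j k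
  have ne: "{..<n} \<noteq> {}" using i by auto
  have "A i k + (mp_det n (replace_col A b k) - mp_det n A) = Max ((\<lambda>j. g j k) ` {..<n})"
    if "k < n" for k
    unfolding mp_det_replace_col[OF that] d g_def
      ereal_Max_minus[OF finite_lessThan ne] ereal_add_Max[OF finite_lessThan ne] ..
  then have "mp_mulv n A (\<lambda>k. mp_det n (replace_col A b k) - mp_det n A) i
      = Max ((\<lambda>k. Max ((\<lambda>j. g j k) ` {..<n})) ` {..<n})"
    unfolding mp_mulv_def by (intro arg_cong[where f = Max] image_cong) auto
  also have "\<dots> = Max ((\<lambda>j. Max ((\<lambda>k. g j k) ` {..<n})) ` {..<n})"
    by (rule Max_Max_commute[OF finite_lessThan ne finite_lessThan ne])
  also have "\<dots> = Max ((\<lambda>j. b j + mp_mult n A (mp_pinv n A) i j) ` {..<n})"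
  proof (intro arg_cong[where f = Max] image_cong refl)
    fix j
    have "b j + mp_mult n A (mp_pinv n A) i j
        = Max ((\<lambda>k. b j + (A i k + (mp_det (n-1) (minor A j k) - ereal d))) ` {..<n})"
      unfolding mp_mult_def mp_pinv_def mp_adj_def d ereal_add_Max[OF finite_lessThan ne] ..
    also have "\<dots> = Max ((\<lambda>k. g j k) ` {..<n})"
      by (simp add: g_def minus_ereal_def add_ac)
    finally show "Max ((\<lambda>k. g j k) ` {..<n}) = b j + mp_mult n A (mp_pinv n A) i j" ..
  qed
  finally show ?thesis .
qed

lemma mp_mulv_cramer_eq_iff:
  assumes d: "mp_det n A = ereal d" and b: "\<forall>j<n. \<bar>b j\<bar> \<noteq> \<infinity>" and i: "i < n"
  shows "mp_mulv n A (\<lambda>k. mp_det n (replace_col A b k) - mp_det n A) i = b i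
    \<longleftrightarrow> (\<forall>j<n. mp_mult n A (mp_pinv n A) i j \<le> b i - b j)"
proof -
  let ?M = "mp_mult n A (mp_pinv n A)"
  have ne: "{..<n} \<noteq> {}" using i by auto
  have "b i = b i + ?M i i" using mp_mult_pinv_diag[OF d i] by simp
  also have "\<dots> \<le> Max ((\<lambda>j. b j + ?M i j) ` {..<n})" using i by (intro Max_ge) auto
  finally have "Max ((\<lambda>j. b j + ?M i j) ` {..<n}) = b i
      \<longleftrightarrow> Max ((\<lambda>j. b j + ?M i j) ` {..<n}) \<le> b i"
    by auto
  also have "\<dots> \<longleftrightarrow> (\<forall>j<n. b j + ?M i j \<le> b i)"
    using ne by (auto simp: Max_le_iff)
  also have "\<dots> \<longleftrightarrow> (\<forall>j<n. ?M i j \<le> b i - b j)"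
    using b by (auto simp: ereal_le_minus add.commute)
  finally show ?thesis by (simp add: mp_mulv_cramer[OF d i])
qed

lemma mp_subsolution_le_cramer:
  assumes d: "mp_det n A = ereal d" and Y: "\<forall>i<n. mp_mulv n A Y i \<le> b i" and k: "k < n"
  shows "Y k \<le> mp_det n (replace_col A b k) - mp_det n A"
proof -
  have "mp_det n A \<in> (\<lambda>i. A i k + mp_det (n-1) (minor A i k)) ` {..<n}"
    unfolding mp_det_col_expansion[OF k, of A] using k by (intro Max_in) auto
  then obtain i where i: "i < n" and sum: "A i k + mp_det (n-1) (minor A i k) = ereal d"
    using d by auto
  have "A i k + Y k \<le> mp_mulv n A Y i"
    unfolding mp_mulv_def using k by (intro Max_ge) auto
  also have "\<dots> \<le> b i" using Y i by blast
  finally have "A i k + Y k \<le> b i" .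
  moreover have "b i + mp_det (n-1) (minor A i k) \<le> mp_det n (replace_col A b k)"
    unfolding mp_det_replace_col[OF k] using i by (intro Max_ge) auto
  ultimately show ?thesis using ereal_le_minus_via_sum[OF sum] d by simp
qed

theorem theorem4p8:
  fixes n :: nat and A :: "nat \<Rightarrow> nat \<Rightarrow> ereal" and b :: "nat \<Rightarrow> ereal"
  assumes A_S: "\<forall>i<n. \<forall>j<n. A i j \<noteq> \<infinity>"
    and b_reg: "\<forall>i<n. b i \<noteq> \<infinity> \<and> b i \<noteq> -\<infinity>"
    and d_unit: "mp_det n A \<noteq> -\<infinity>"
  shows "mp_max_solution n A b (\<lambda>j. mp_det n (replace_col A b j) - mp_det n A)
     \<longleftrightarrow> (\<forall>i<n. \<forall>j<n. mp_mult n A (mp_pinv n A) i j \<le> b i - b j)"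
proof -
  obtain d where d: "mp_det n A = ereal d"
    using d_unit mp_det_neq_PInf[of n A] A_S by (cases "mp_det n A") auto
  define X where "X = (\<lambda>k. mp_det n (replace_col A b k) - mp_det n A)"
  have b_fin: "\<forall>j<n. \<bar>b j\<bar> \<noteq> \<infinity>" using b_reg by auto
  have X_fin: "X k \<noteq> \<infinity>" for k
  proof -
    have "mp_det n (replace_col A b k) \<noteq> \<infinity>"
      by (rule mp_det_neq_PInf) (use A_S b_reg in \<open>auto simp: replace_col_def\<close>)
    then show ?thesis by (cases "mp_det n (replace_col A b k)") (auto simp: X_def d)
  qed
  have "mp_solution n A b X \<longleftrightarrow> (\<forall>i<n. \<forall>j<n. mp_mult n A (mp_pinv n A) i j \<le> b i - b j)"
    unfolding mp_solution_def using X_fin mp_mulv_cramer_eq_iff[OF d b_fin] by (simp add: X_def)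
  moreover have "\<forall>Y. mp_solution n A b Y \<longrightarrow> (\<forall>k<n. Y k \<le> X k)"
    using mp_subsolution_le_cramer[OF d] by (simp add: mp_solution_def X_def)
  ultimately show ?thesis
    unfolding mp_max_solution_def X_def by blast
qed

end
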